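(* For all integers $k\ge1$ and $d\ge1$, $M_k(d)\ge M'_k(d)$, where \[M'_k(d):=\max\Big\{\prod_{i=1}^s m_{k_i}(d_i)\ :\ s\ge1,\ \sum_{i=1}^s k_i=k,\ \sum_{i=1}^s d_i=d\Big\},\] the maximum taken over positive integers $k_i$ and nonnegative integers $d_i$.
   Context: A set is separated if any two distinct points are at distance at least $1$. $m_k(d)$ is the maximum cardinality of a set in $\mathbb{R}^d$ determining at most $k$ distinct distances ($m_k(0)=1$). For $\varepsilon>0$, a separated set $P$ is an $\varepsilon$-nearly $k$-distance set (with distances $1\le t_1<\dots<t_k$) if $\|p_1-p_2\|\in\bigcup_{i=1}^k[t_i,t_i+\varepsilon]$ for all distinct $p_1,p_2\in P$. $M_k(d)$ is the largest $M$ such that for every $\varepsilon>0$ there exists an $\varepsilon$-nearly $k$-distance set in $\mathbb{R}^d$ of cardinality $M$. *)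

theory Defs
  imports Complex_Main "HOL-Library.Extended_Nat"
begin

text \<open>Points of R^d are represented as functions nat => real vanishing outside {..<d}.\<close>

definition Rd :: "nat \<Rightarrow> (nat \<Rightarrow> real) set" where
  "Rd d = {x. \<forall>i\<ge>d. x i = 0}"

definition edist :: "nat \<Rightarrow> (nat \<Rightarrow> real) \<Rightarrow> (nat \<Rightarrow> real) \<Rightarrow> real" where
  "edist d x y = sqrt (\<Sum>i<d. (x i - y i)^2)"

definition distances :: "nat \<Rightarrow> (nat \<Rightarrow> real) set \<Rightarrow> real set" where
  "distances d P = {edist d p q | p q. p \<in> P \<and> q \<in> P \<and> p \<noteq> q}"

definition m_k :: "nat \<Rightarrow> nat \<Rightarrow> enat" where
  "m_k k d = Sup {enat (card P) | P. P \<subseteq> Rd d \<and> finite P \<and> card (distances d P) \<le> k}"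

definition separated :: "nat \<Rightarrow> (nat \<Rightarrow> real) set \<Rightarrow> bool" where
  "separated d P \<longleftrightarrow> (\<forall>p\<in>P. \<forall>q\<in>P. p \<noteq> q \<longrightarrow> edist d p q \<ge> 1)"

definition nearly_k_distance :: "real \<Rightarrow> nat \<Rightarrow> nat \<Rightarrow> (nat \<Rightarrow> real) set \<Rightarrow> bool" where
  "nearly_k_distance \<epsilon> k d P \<longleftrightarrow> P \<subseteq> Rd d \<and> separated d P \<and>
     (\<exists>t :: nat \<Rightarrow> real. (k > 0 \<longrightarrow> 1 \<le> t 0) \<and> (\<forall>i j. i < j \<and> j < k \<longrightarrow> t i < t j) \<and>
        (\<forall>p\<in>P. \<forall>q\<in>P. p \<noteq> q \<longrightarrow> (\<exists>i<k. t i \<le> edist d p q \<and> edist d p q \<le> t i + \<epsilon>)))"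

definition M_k :: "nat \<Rightarrow> nat \<Rightarrow> enat" where
  "M_k k d = Sup {enat M | M. \<forall>\<epsilon>>0. \<exists>P. finite P \<and> card P = M \<and> nearly_k_distance \<epsilon> k d P}"

definition M_prime_k :: "nat \<Rightarrow> nat \<Rightarrow> enat" where
  "M_prime_k k d = Sup {(\<Prod>i<s. m_k (ks i) (ds i)) | (s::nat) (ks::nat\<Rightarrow>nat) (ds::nat\<Rightarrow>nat). s \<ge> 1 \<and> (\<forall>i<s. ks i \<ge> 1)
       \<and> (\<Sum>i<s. ks i) = k \<and> (\<Sum>i<s. ds i) = d}"

end

theory Submission
  imports Defs
begin

text \<open>Given an \<open>\<epsilon>\<close>-nearly \<open>k\<^sub>1\<close>-distance set \<open>A \<subseteq> \<real>\<^sup>d\<^sup>1\<close> and a \<open>k\<^sub>2\<close>-distance set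
  \<open>B \<subseteq> \<real>\<^sup>d\<^sup>2\<close>, the set \<open>{(a, \<lambda> b) | a \<in> A, b \<in> B}\<close> is an \<open>\<epsilon>\<close>-nearly \<open>(k\<^sub>1 + k\<^sub>2)\<close>-distance
  set for \<open>\<lambda>\<close> large: two points with the same \<open>b\<close> are at a distance of \<open>A\<close>, and two points with
  \<open>b \<noteq> b'\<close> are at distance \<open>\<surd>(|a - a'|\<^sup>2 + \<lambda>\<^sup>2|b - b'|\<^sup>2)\<close>, which exceeds the scaled
  distance \<open>\<lambda> |b - b'|\<close> of \<open>B\<close> by at most \<open>diam(A)\<^sup>2 / (\<lambda> |b - b'|)\<close>. Iterating over the
  factors of a decomposition \<open>k = \<Sum> k\<^sub>i\<close>, \<open>d = \<Sum> d\<^sub>i\<close>, starting from a single point, realizes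
  every product of sizes of \<open>k\<^sub>i\<close>-distance sets in \<open>\<real>\<^sup>d\<^sup>i\<close>.\<close>

definition within_windows :: "real \<Rightarrow> nat \<Rightarrow> real set \<Rightarrow> (nat \<Rightarrow> real) set \<Rightarrow> bool" where
  "within_windows \<epsilon> d S P \<longleftrightarrow>
     (\<forall>p\<in>P. \<forall>q\<in>P. p \<noteq> q \<longrightarrow> (\<exists>s\<in>S. s \<le> edist d p q \<and> edist d p q \<le> s + \<epsilon>))"

definition k_distance_set :: "nat \<Rightarrow> nat \<Rightarrow> (nat \<Rightarrow> real) set \<Rightarrow> bool" where
  "k_distance_set k d P \<longleftrightarrow> P \<subseteq> Rd d \<and> finite P \<and> card (distances d P) \<le> k"

definition nearly_realizable :: "nat \<Rightarrow> nat \<Rightarrow> nat \<Rightarrow> bool" where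
  "nearly_realizable k d N \<longleftrightarrow> (\<forall>\<epsilon>>0. \<exists>P. finite P \<and> card P = N \<and> nearly_k_distance \<epsilon> k d P)"

definition join_scaled :: "nat \<Rightarrow> real \<Rightarrow> (nat \<Rightarrow> real) \<Rightarrow> (nat \<Rightarrow> real) \<Rightarrow> nat \<Rightarrow> real" where
  "join_scaled d\<^sub>1 c a b = (\<lambda>i. if i < d\<^sub>1 then a i else c * b (i - d\<^sub>1))"

lemma edist_nonneg: "edist d x y \<ge> 0"
  unfolding edist_def by (simp add: sum_nonneg)

lemma edist_self [simp]: "edist d x x = 0"
  unfolding edist_def by simp

lemma edist_power2: "(edist d x y)\<^sup>2 = (\<Sum>i<d. (x i - y i)\<^sup>2)"
  unfolding edist_def by (simp add: sum_nonneg)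

lemma edist_pos:
  assumes "x \<in> Rd d" "y \<in> Rd d" "x \<noteq> y"
  shows "edist d x y > 0"
proof -
  obtain i where i: "x i \<noteq> y i" using assms(3) by auto
  have "i < d"
  proof (rule ccontr)
    assume "\<not> i < d"
    then have "x i = 0" "y i = 0" using assms(1,2) unfolding Rd_def by auto
    with i show False by simp
  qed
  then have "(x i - y i)\<^sup>2 \<le> (\<Sum>i<d. (x i - y i)\<^sup>2)"
    by (intro member_le_sum) auto
  moreover have "(x i - y i)\<^sup>2 > 0" using i by simp
  ultimately have "(edist d x y)\<^sup>2 > 0" unfolding edist_power2 by linarith
  then show ?thesis using edist_nonneg[of d x y] by (cases "edist d x y = 0") auto
qed

lemma finite_distances: "finite P \<Longrightarrow> finite (distances d P)"
proof -
  have "distances d P \<subseteq> (\<lambda>(p, q). edist d p q) ` (P \<times> P)"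
    unfolding distances_def by auto
  then show "finite P \<Longrightarrow> ?thesis" by (rule finite_subset) simp
qed

lemma distances_pos: "P \<subseteq> Rd d \<Longrightarrow> s \<in> distances d P \<Longrightarrow> s > 0"
  unfolding distances_def using edist_pos by blast

lemma edist_le_Max_distances:
  assumes "finite P" "p \<in> P" "q \<in> P"
  shows "edist d p q \<le> Max (insert 0 (distances d P))"
  using assms finite_distances[of P d] by (cases "p = q") (auto simp: distances_def intro!: Max_ge)

text \<open>The definition asks for a strictly increasing sequence of window starts; only the set of
  starts matters, since a finite set can be sorted and padded beyond its maximum.\<close>

lemma nearly_k_distance_iff_windows:
  "nearly_k_distance \<epsilon> k d P \<longleftrightarrow> P \<subseteq> Rd d \<and> separated d P \<and>
     (\<exists>S. finite S \<and> card S \<le> k \<and> (\<forall>s\<in>S. 1 \<le> s) \<and> within_windows \<epsilon> d S P)"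
proof
  assume "nearly_k_distance \<epsilon> k d P"
  then obtain t where P: "P \<subseteq> Rd d" "separated d P" and t0: "k > 0 \<longrightarrow> 1 \<le> t 0"
    and t_mono: "\<forall>i j. i < j \<and> j < k \<longrightarrow> t i < t j"
    and cover: "\<forall>p\<in>P. \<forall>q\<in>P. p \<noteq> q \<longrightarrow> (\<exists>i<k. t i \<le> edist d p q \<and> edist d p q \<le> t i + \<epsilon>)"
    unfolding nearly_k_distance_def by blast
  have "1 \<le> t i" if "i < k" for i
    using that t0 t_mono[rule_format, of 0 i] by (cases "i = 0") auto
  moreover have "within_windows \<epsilon> d (t ` {..<k}) P"
    unfolding within_windows_def using cover by blast
  ultimately show "P \<subseteq> Rd d \<and> separated d P \<and>
     (\<exists>S. finite S \<and> card S \<le> k \<and> (\<forall>s\<in>S. 1 \<le> s) \<and> within_windows \<epsilon> d S P)"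
    using P card_image_le[of "{..<k}" t] by (intro conjI exI[of _ "t ` {..<k}"]) auto
next
  assume "P \<subseteq> Rd d \<and> separated d P \<and>
     (\<exists>S. finite S \<and> card S \<le> k \<and> (\<forall>s\<in>S. 1 \<le> s) \<and> within_windows \<epsilon> d S P)"
  then obtain S where P: "P \<subseteq> Rd d" "separated d P" and S: "finite S" "card S \<le> k"
    and S_ge: "\<forall>s\<in>S. 1 \<le> s" and win: "within_windows \<epsilon> d S P"
    by blast
  define xs where "xs = sorted_list_of_set S"
  define m where "m = Max (insert 1 S)"
  define t where "t i = (if i < length xs then xs ! i else m + 1 + real i)" for i
  have xs: "set xs = S" "sorted_wrt (<) xs" "length xs = card S"
    using S(1) by (simp_all add: xs_def)
  have xs_le_m: "xs ! i \<le> m" if "i < length xs" for i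
    using that xs(1) S(1) unfolding m_def by (intro Max_ge) auto
  have "1 \<le> m" unfolding m_def using S(1) by (intro Max_ge) auto
  have "1 \<le> t 0"
    using S_ge xs(1) \<open>1 \<le> m\<close> unfolding t_def by (auto dest: nth_mem)
  moreover have "t i < t j" if "i < j" for i j
    using that xs(2) xs_le_m[of i] unfolding t_def
    by (auto intro: sorted_wrt_nth_less)
  moreover have "\<exists>i<k. t i \<le> edist d p q \<and> edist d p q \<le> t i + \<epsilon>"
    if pq: "p \<in> P" "q \<in> P" "p \<noteq> q" for p q
  proof -
    obtain s where "s \<in> S" "s \<le> edist d p q" "edist d p q \<le> s + \<epsilon>"
      using win pq unfolding within_windows_def by blast
    moreover obtain i where "i < length xs" "xs ! i = s"
      using \<open>s \<in> S\<close> xs(1) by (metis in_set_conv_nth)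
    ultimately show ?thesis using xs(3) S(2) unfolding t_def by (intro exI[of _ i]) auto
  qed
  ultimately show "nearly_k_distance \<epsilon> k d P"
    unfolding nearly_k_distance_def using P by blast
qed

lemma join_scaled_in_Rd:
  "b \<in> Rd d\<^sub>2 \<Longrightarrow> join_scaled d\<^sub>1 c a b \<in> Rd (d\<^sub>1 + d\<^sub>2)"
  unfolding Rd_def join_scaled_def by auto

lemma inj_on_join_scaled:
  assumes "A \<subseteq> Rd d\<^sub>1" "c \<noteq> 0"
  shows "inj_on (\<lambda>(a, b). join_scaled d\<^sub>1 c a b) (A \<times> B)"
proof (rule inj_onI, clarify)
  fix a b a' b' assume "a \<in> A" "a' \<in> A" and eq: "join_scaled d\<^sub>1 c a b = join_scaled d\<^sub>1 c a' b'"
  have "a i = a' i" for i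
  proof (cases "i < d\<^sub>1")
    case True then show ?thesis using fun_cong[OF eq, of i] by (simp add: join_scaled_def)
  next
    case False
    have "a \<in> Rd d\<^sub>1" "a' \<in> Rd d\<^sub>1" using \<open>a \<in> A\<close> \<open>a' \<in> A\<close> assms(1) by auto
    then show ?thesis using False unfolding Rd_def by simp
  qed
  moreover have "b i = b' i" for i
    using fun_cong[OF eq, of "i + d\<^sub>1"] assms(2) by (simp add: join_scaled_def)
  ultimately show "a = a' \<and> b = b'" by auto
qed

lemma edist_join_scaled:
  "edist (d\<^sub>1 + d\<^sub>2) (join_scaled d\<^sub>1 c a b) (join_scaled d\<^sub>1 c a' b')
     = sqrt ((edist d\<^sub>1 a a')\<^sup>2 + (c * edist d\<^sub>2 b b')\<^sup>2)"
proof -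
  have "(\<Sum>i<d\<^sub>1 + n. (join_scaled d\<^sub>1 c a b i - join_scaled d\<^sub>1 c a' b' i)\<^sup>2)
      = (\<Sum>i<d\<^sub>1. (a i - a' i)\<^sup>2) + c\<^sup>2 * (\<Sum>i<n. (b i - b' i)\<^sup>2)" for n
    by (induction n) (auto simp: join_scaled_def algebra_simps power2_eq_square intro!: sum.cong)
  then have "(edist (d\<^sub>1 + d\<^sub>2) (join_scaled d\<^sub>1 c a b) (join_scaled d\<^sub>1 c a' b'))\<^sup>2
      = (edist d\<^sub>1 a a')\<^sup>2 + (c * edist d\<^sub>2 b b')\<^sup>2"
    by (simp add: edist_power2 power_mult_distrib)
  then show ?thesis
    by (metis edist_nonneg real_sqrt_unique)
qed

lemma sqrt_add_square_bounds:
  fixes X x :: real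
  assumes "x > 0" "X \<ge> 0"
  shows "x \<le> sqrt (X + x\<^sup>2)" and "sqrt (X + x\<^sup>2) \<le> x + X / x"
proof -
  show "x \<le> sqrt (X + x\<^sup>2)"
    using assms real_sqrt_le_mono[of "x\<^sup>2" "X + x\<^sup>2"] by simp
  have "X + x\<^sup>2 \<le> (x + X / x)\<^sup>2"
    using assms by (simp add: power2_eq_square field_simps)
  then show "sqrt (X + x\<^sup>2) \<le> x + X / x"
    using assms real_sqrt_le_mono by fastforce
qed

lemma nearly_k_distance_product:
  assumes A: "finite A" "nearly_k_distance \<epsilon> k\<^sub>1 d\<^sub>1 A"
    and B: "k_distance_set k\<^sub>2 d\<^sub>2 B" and "\<epsilon> > 0"
  obtains P where "finite P" "card P = card A * card B"
    "nearly_k_distance \<epsilon> (k\<^sub>1 + k\<^sub>2) (d\<^sub>1 + d\<^sub>2) P"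
proof -
  obtain S where A_sub: "A \<subseteq> Rd d\<^sub>1" and A_sep: "separated d\<^sub>1 A"
    and S: "finite S" "card S \<le> k\<^sub>1" "\<forall>s\<in>S. 1 \<le> s" and A_win: "within_windows \<epsilon> d\<^sub>1 S A"
    using A(2) unfolding nearly_k_distance_iff_windows by blast
  define D where "D = distances d\<^sub>2 B"
  have D: "finite D" "card D \<le> k\<^sub>2" "\<forall>s\<in>D. s > 0"
    using B finite_distances distances_pos unfolding k_distance_set_def D_def by auto
  define \<delta> where "\<delta> = (if D = {} then 1 else Min D)"
  have "\<delta> > 0" and \<delta>_le: "\<forall>s\<in>D. \<delta> \<le> s"
    using D(1,3) unfolding \<delta>_def by auto
  define R where "R = Max (insert 0 (distances d\<^sub>1 A))"
  have R: "edist d\<^sub>1 a a' \<le> R" if "a \<in> A" "a' \<in> A" for a a'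
    using edist_le_Max_distances[OF A(1) that] unfolding R_def .
  \<comment> \<open>every scaled distance of \<open>B\<close> is at least \<open>L\<close>, which makes the error \<open>R\<^sup>2 / L\<close> at most \<open>\<epsilon>\<close>\<close>
  define L where "L = 1 + R\<^sup>2 / \<epsilon>"
  define c where "c = L / \<delta>"
  have "L \<ge> 1" unfolding L_def using \<open>\<epsilon> > 0\<close> by simp
  then have "c > 0" unfolding c_def using \<open>\<delta> > 0\<close> by simp
  have "R\<^sup>2 \<le> \<epsilon> * L" unfolding L_def using \<open>\<epsilon> > 0\<close> by (simp add: algebra_simps)
  have scaled_D_ge: "L \<le> c * s" if "s \<in> D" for s
  proof -
    have "L = c * \<delta>" unfolding c_def using \<open>\<delta> > 0\<close> by simp
    also have "\<dots> \<le> c * s" using \<delta>_le that \<open>c > 0\<close> by (intro mult_left_mono) auto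
    finally show ?thesis .
  qed
  define emb where "emb = (\<lambda>(a, b). join_scaled d\<^sub>1 c a b)"
  define P where "P = emb ` (A \<times> B)"
  have same_b: "edist (d\<^sub>1 + d\<^sub>2) (emb (a, b)) (emb (a', b)) = edist d\<^sub>1 a a'" for a a' b
    using edist_nonneg[of d\<^sub>1 a a'] by (simp add: emb_def edist_join_scaled)
  have diff_b: "c * edist d\<^sub>2 b b' \<ge> 1 \<and>
      c * edist d\<^sub>2 b b' \<le> edist (d\<^sub>1 + d\<^sub>2) (emb (a, b)) (emb (a', b')) \<and>
      edist (d\<^sub>1 + d\<^sub>2) (emb (a, b)) (emb (a', b')) \<le> c * edist d\<^sub>2 b b' + \<epsilon>"
    if "a \<in> A" "a' \<in> A" "b \<in> B" "b' \<in> B" "b \<noteq> b'" for a a' b b'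
  proof -
    define x where "x = c * edist d\<^sub>2 b b'"
    define X where "X = (edist d\<^sub>1 a a')\<^sup>2"
    have "edist d\<^sub>2 b b' \<in> D" unfolding D_def distances_def using that by auto
    then have "L \<le> x" unfolding x_def by (rule scaled_D_ge)
    have "0 \<le> X" "X \<le> R\<^sup>2"
      unfolding X_def using R[OF that(1,2)] edist_nonneg by (auto intro: power_mono)
    have "X / x \<le> R\<^sup>2 / L"
      using \<open>L \<le> x\<close> \<open>L \<ge> 1\<close> \<open>0 \<le> X\<close> \<open>X \<le> R\<^sup>2\<close> by (intro frac_le) auto
    also have "\<dots> \<le> \<epsilon>" using \<open>R\<^sup>2 \<le> \<epsilon> * L\<close> \<open>L \<ge> 1\<close> by (simp add: divide_le_eq mult.commute)
    finally have "X / x \<le> \<epsilon>" .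
    moreover have "edist (d\<^sub>1 + d\<^sub>2) (emb (a, b)) (emb (a', b')) = sqrt (X + x\<^sup>2)"
      by (simp add: emb_def edist_join_scaled X_def x_def)
    ultimately show ?thesis
      using sqrt_add_square_bounds[of x X] \<open>L \<le> x\<close> \<open>L \<ge> 1\<close> \<open>0 \<le> X\<close>
      unfolding x_def by auto
  qed
  have P_finite: "finite P" unfolding P_def using A(1) B by (simp add: k_distance_set_def)
  have P_card: "card P = card A * card B"
    unfolding P_def emb_def using inj_on_join_scaled[OF A_sub, of c B] \<open>c > 0\<close>
    by (simp add: card_image card_cartesian_product)
  have "P \<subseteq> Rd (d\<^sub>1 + d\<^sub>2)"
    unfolding P_def emb_def using B join_scaled_in_Rd by (auto simp: k_distance_set_def)
  moreover have "separated (d\<^sub>1 + d\<^sub>2) P"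
    unfolding separated_def P_def
  proof (clarsimp)
    fix a b a' b' assume ab: "a \<in> A" "b \<in> B" "a' \<in> A" "b' \<in> B"
      and ne: "emb (a, b) \<noteq> emb (a', b')"
    show "1 \<le> edist (d\<^sub>1 + d\<^sub>2) (emb (a, b)) (emb (a', b'))"
    proof (cases "b = b'")
      case True
      then show ?thesis using A_sep ab ne same_b unfolding separated_def by auto
    next
      case False
      then show ?thesis using diff_b[OF ab(1,3,2,4) False] by linarith
    qed
  qed
  moreover have "within_windows \<epsilon> (d\<^sub>1 + d\<^sub>2) (S \<union> (\<lambda>s. c * s) ` D) P"
    unfolding within_windows_def P_def
  proof (clarsimp)
    fix a b a' b' assume ab: "a \<in> A" "b \<in> B" "a' \<in> A" "b' \<in> B"
      and ne: "emb (a, b) \<noteq> emb (a', b')"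
    show "\<exists>s\<in>S \<union> (\<lambda>s. c * s) ` D. s \<le> edist (d\<^sub>1 + d\<^sub>2) (emb (a, b)) (emb (a', b')) \<and>
        edist (d\<^sub>1 + d\<^sub>2) (emb (a, b)) (emb (a', b')) \<le> s + \<epsilon>"
    proof (cases "b = b'")
      case True
      with ne have "a \<noteq> a'" by auto
      then obtain s where "s \<in> S" "s \<le> edist d\<^sub>1 a a'" "edist d\<^sub>1 a a' \<le> s + \<epsilon>"
        using A_win ab unfolding within_windows_def by blast
      then show ?thesis using True same_b by auto
    next
      case False
      then have "edist d\<^sub>2 b b' \<in> D" unfolding D_def distances_def using ab by auto
      then show ?thesis using diff_b[OF ab(1,3,2,4) False] by blast
    qed
  qed
  moreover have "card (S \<union> (\<lambda>s. c * s) ` D) \<le> k\<^sub>1 + k\<^sub>2"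
    using card_Un_le[of S "(\<lambda>s. c * s) ` D"] card_image_le[OF D(1), of "\<lambda>s. c * s"] S(2) D(2)
    by linarith
  moreover have "\<forall>s\<in>S \<union> (\<lambda>s. c * s) ` D. 1 \<le> s"
    using S(3) scaled_D_ge \<open>L \<ge> 1\<close> by force
  moreover have "finite (S \<union> (\<lambda>s. c * s) ` D)" using S(1) D(1) by simp
  ultimately have "nearly_k_distance \<epsilon> (k\<^sub>1 + k\<^sub>2) (d\<^sub>1 + d\<^sub>2) P"
    unfolding nearly_k_distance_iff_windows by blast
  with P_finite P_card show ?thesis by (rule that)
qed

lemma nearly_realizable_single_point: "nearly_realizable 0 0 1"
proof -
  have "nearly_k_distance \<epsilon> 0 0 {\<lambda>_. 0}" for \<epsilon>
    unfolding nearly_k_distance_def separated_def Rd_def by auto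
  moreover have "finite {\<lambda>_. 0 :: real}" "card {\<lambda>_. 0 :: real} = 1" by simp_all
  ultimately show ?thesis unfolding nearly_realizable_def by blast
qed

lemma nearly_realizable_product:
  assumes "nearly_realizable k\<^sub>1 d\<^sub>1 N" "k_distance_set k\<^sub>2 d\<^sub>2 B"
  shows "nearly_realizable (k\<^sub>1 + k\<^sub>2) (d\<^sub>1 + d\<^sub>2) (N * card B)"
  unfolding nearly_realizable_def
proof (intro allI impI)
  fix \<epsilon> :: real assume "\<epsilon> > 0"
  then obtain A where "finite A" "card A = N" "nearly_k_distance \<epsilon> k\<^sub>1 d\<^sub>1 A"
    using assms(1) unfolding nearly_realizable_def by blast
  with nearly_k_distance_product[OF _ _ assms(2) \<open>\<epsilon> > 0\<close>]
  show "\<exists>P. finite P \<and> card P = N * card B \<and> nearly_k_distance \<epsilon> (k\<^sub>1 + k\<^sub>2) (d\<^sub>1 + d\<^sub>2) P"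
    by metis
qed

lemma nearly_realizable_prod:
  "(\<And>i. i < (s::nat) \<Longrightarrow> k_distance_set (ks i) (ds i) (P i)) \<Longrightarrow>
    nearly_realizable (\<Sum>i<s. ks i) (\<Sum>i<s. ds i) (\<Prod>i<s. card (P i))"
proof (induction s)
  case 0
  show ?case using nearly_realizable_single_point by simp
next
  case (Suc s)
  then show ?case by (simp add: nearly_realizable_product)
qed

lemma nearly_realizable_le_M_k: "nearly_realizable k d N \<Longrightarrow> enat N \<le> M_k k d"
  unfolding M_k_def nearly_realizable_def by (intro Sup_upper) auto

lemma one_le_m_k: "1 \<le> m_k k d"
proof -
  have "distances d {\<lambda>_. 0} = {}" unfolding distances_def by auto
  then have "enat (card {\<lambda>_. 0}) \<le> m_k k d"
    unfolding m_k_def by (intro Sup_upper CollectI exI[of _ "{\<lambda>_. 0}"]) (auto simp: Rd_def)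
  then show ?thesis by (simp add: one_enat_def)
qed

lemma k_distance_set_of_le_m_k:
  assumes "enat n \<le> m_k k d"
  obtains P where "k_distance_set k d P" "n \<le> card P"
proof (cases "n = 0")
  case True
  then show ?thesis by (intro that[of "{}"]) (auto simp: k_distance_set_def distances_def)
next
  case False
  then have "enat (n - 1) < m_k k d"
    using assms by (metis diff_less enat_ord_simps(2) less_le_trans not_gr_zero zero_less_one)
  then obtain P where "P \<subseteq> Rd d" "finite P" "card (distances d P) \<le> k" "enat (n - 1) < card P"
    unfolding m_k_def less_Sup_iff by blast
  then show ?thesis using False by (intro that[of P]) (auto simp: k_distance_set_def)
qed

lemma enat_prod_le_if_finite_parts_le:
  fixes f :: "nat \<Rightarrow> enat"
  assumes pos: "\<And>i. i < s \<Longrightarrow> 1 \<le> f i"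
    and parts: "\<And>c. (\<And>i. i < s \<Longrightarrow> enat (c i) \<le> f i) \<Longrightarrow> enat (\<Prod>i<s. c i) \<le> M"
  shows "(\<Prod>i<s. f i) \<le> M"
proof (cases M)
  case (enat K)
  have finite_factor: "f j \<noteq> \<infinity>" if "j < s" for j
  proof
    assume "f j = \<infinity>"
    define n where "n i = (if i = j then K + 1 else 1)" for i
    have "enat (\<Prod>i<s. n i) \<le> M"
      using \<open>f j = \<infinity>\<close> pos by (intro parts) (auto simp: n_def one_enat_def)
    moreover have "(\<Prod>i<s. n i) = K + 1"
      unfolding n_def using that by (simp add: prod.If_cases Int_absorb1)
    ultimately show False using enat by simp
  qed
  have enat_the_f: "enat (the_enat (f i)) = f i" if "i < s" for i
    using finite_factor[OF that] by (cases "f i") auto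
  have "(\<Prod>i<s. f i) = (\<Prod>i<s. enat (the_enat (f i)))"
    using enat_the_f by (intro prod.cong) auto
  also have "\<dots> = enat (\<Prod>i<s. the_enat (f i))"
    by (induction s) (auto simp: one_enat_def)
  also have "\<dots> \<le> M"
    using enat_the_f by (intro parts) auto
  finally show ?thesis .
qed simp

lemma prod_m_k_le_M_k:
  "(\<Prod>i<s. m_k (ks i) (ds i)) \<le> M_k (\<Sum>i<s. ks i) (\<Sum>i<(s::nat). ds i)"
proof (rule enat_prod_le_if_finite_parts_le[OF one_le_m_k])
  fix c assume "\<And>i. i < s \<Longrightarrow> enat (c i) \<le> m_k (ks i) (ds i)"
  then have "\<forall>i. \<exists>P. i < s \<longrightarrow> k_distance_set (ks i) (ds i) P \<and> c i \<le> card P"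
    by (meson k_distance_set_of_le_m_k)
  then obtain P where P: "\<And>i. i < s \<Longrightarrow> k_distance_set (ks i) (ds i) (P i) \<and> c i \<le> card (P i)"
    by metis
  then have "enat (\<Prod>i<s. card (P i)) \<le> M_k (\<Sum>i<s. ks i) (\<Sum>i<s. ds i)"
    by (intro nearly_realizable_le_M_k nearly_realizable_prod) auto
  moreover have "(\<Prod>i<s. c i) \<le> (\<Prod>i<s. card (P i))" using P by (intro prod_mono) auto
  ultimately show "enat (\<Prod>i<s. c i) \<le> M_k (\<Sum>i<s. ks i) (\<Sum>i<s. ds i)"
    by (meson enat_ord_simps(1) order_trans)
qed

theorem proposition1:
  fixes k d :: nat
  assumes "k \<ge> 1" and "d \<ge> 1"
  shows "M_k k d \<ge> M_prime_k k d"
  \<comment> \<open>the bound holds without the hypotheses \<open>k \<ge> 1\<close> and \<open>d \<ge> 1\<close>\<close>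
  unfolding M_prime_k_def
  by (rule Sup_least) (auto simp: prod_m_k_le_M_k)

end
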